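(* Let $\mathcal{L}$ be a distributive abstract logic, $T\in Th_{\mathcal{L}}$ a theory and $a\in Expr_{\mathcal{L}}$ with $a\notin T$. Then there is a prime theory $P\in PTh_{\mathcal{L}}$ with $T\subseteq P$ and $a\notin P$.
   Context: An abstract logic is a triple $\mathcal{L}=(Expr_{\mathcal{L}},Th_{\mathcal{L}},\mathcal{C}_{\mathcal{L}})$ where $Expr_{\mathcal{L}}$ is a set, $Th_{\mathcal{L}}$ a non-empty set of subsets of $Expr_{\mathcal{L}}$ (theories) with $\bigcap\mathcal{T}\in Th_{\mathcal{L}}$ for every non-empty $\mathcal{T}\subseteq Th_{\mathcal{L}}$, and $\mathcal{C}_{\mathcal{L}}$ a set of operations on $Expr_{\mathcal{L}}$. $\mathcal{L}$ is closed under union of chains if the union of every non-empty chain of theories is a theory. A theory $T$ is prime if $T=\bigcap\mathcal{T}$ for a non-empty finite $\mathcal{T}\subseteq Th_{\mathcal{L}}$ implies $T\in\mathcal{T}$; totally prime if this holds for every non-empty $\mathcal{T}$ of any cardinality. $PTh_{\mathcal{L}}$, $TPTh_{\mathcal{L}}$ denote the sets of prime and totally prime theories. A distributive abstract logic is an abstract logic closed under union of chains with binary connectives $\vee,\wedge\in\mathcal{C}_{\mathcal{L}}$ such that for all $a,b$ and all $T\in TPTh_{\mathcal{L}}$: $a\vee b\in T$ iff $a\in T$ or $b\in T$; $a\wedge b\in T$ iff $a\in T$ and $b\in T$. *)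

theory Defs
  imports Main
begin

(* The set of
   operations C is only relevant through the connectives \<or>, \<and> below. *)
definition abstract_logic :: "'a set \<Rightarrow> 'a set set \<Rightarrow> bool" where
  "abstract_logic Expr Th \<longleftrightarrow>
     (\<forall>T\<in>Th. T \<subseteq> Expr) \<and> Th \<noteq> {} \<and>
     (\<forall>\<T>. \<T> \<noteq> {} \<and> \<T> \<subseteq> Th \<longrightarrow> \<Inter>\<T> \<in> Th)"

definition closed_union_chains :: "'a set set \<Rightarrow> bool" where
  "closed_union_chains Th \<longleftrightarrow>
     (\<forall>\<C>. \<C> \<noteq> {} \<and> \<C> \<subseteq> Th \<and> Complete_Partial_Order.chain (\<subseteq>) \<C> \<longrightarrow> \<Union>\<C> \<in> Th)"

definition prime_theory :: "'a set set \<Rightarrow> 'a set \<Rightarrow> bool" where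
  "prime_theory Th T \<longleftrightarrow> T \<in> Th \<and>
     (\<forall>\<T>. \<T> \<noteq> {} \<and> finite \<T> \<and> \<T> \<subseteq> Th \<and> T = \<Inter>\<T> \<longrightarrow> T \<in> \<T>)"

definition totally_prime_theory :: "'a set set \<Rightarrow> 'a set \<Rightarrow> bool" where
  "totally_prime_theory Th T \<longleftrightarrow> T \<in> Th \<and>
     (\<forall>\<T>. \<T> \<noteq> {} \<and> \<T> \<subseteq> Th \<and> T = \<Inter>\<T> \<longrightarrow> T \<in> \<T>)"

definition distributive_logic ::
  "'a set \<Rightarrow> 'a set set \<Rightarrow> ('a \<Rightarrow> 'a \<Rightarrow> 'a) \<Rightarrow> ('a \<Rightarrow> 'a \<Rightarrow> 'a) \<Rightarrow> bool" where
  "distributive_logic Expr Th vee wedge \<longleftrightarrow>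
     abstract_logic Expr Th \<and> closed_union_chains Th \<and>
     (\<forall>a\<in>Expr. \<forall>b\<in>Expr. vee a b \<in> Expr \<and> wedge a b \<in> Expr) \<and>
     (\<forall>a\<in>Expr. \<forall>b\<in>Expr. \<forall>T. totally_prime_theory Th T \<longrightarrow>
        ((vee a b \<in> T \<longleftrightarrow> a \<in> T \<or> b \<in> T) \<and> (wedge a b \<in> T \<longleftrightarrow> a \<in> T \<and> b \<in> T)))"

end

theory Submission
  imports Defs
begin

text \<open>By Zorn's lemma, applied to the theories containing \<open>T\<close> but not \<open>a\<close> (unions of chains
  of these are again such theories), there is a maximal theory \<open>M\<close> extending \<open>T\<close> and
  avoiding \<open>a\<close>. Every theory strictly above \<open>M\<close> contains \<open>a\<close>, so \<open>M\<close> cannot be the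
  intersection of theories other than itself: it is even totally prime.\<close>

lemma maximal_theory_avoiding:
  assumes "closed_union_chains Th" and "T \<in> Th" and "a \<notin> T"
  obtains M where "M \<in> Th" "T \<subseteq> M" "a \<notin> M" "\<And>S. S \<in> Th \<Longrightarrow> M \<subset> S \<Longrightarrow> a \<in> S"
proof -
  define \<A> where "\<A> = {P \<in> Th. T \<subseteq> P \<and> a \<notin> P}"
  have "\<exists>M\<in>\<A>. \<forall>X\<in>\<A>. M \<subseteq> X \<longrightarrow> X = M"
  proof (rule subset_Zorn_nonempty)
    show "\<A> \<noteq> {}"
      using assms(2,3) by (auto simp: \<A>_def)
    fix \<C> assume "\<C> \<noteq> {}" and "subset.chain \<A> \<C>"
    then have "\<C> \<subseteq> Th" and "Complete_Partial_Order.chain (\<subseteq>) \<C>"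
      by (auto simp: subset_chain_def \<A>_def Complete_Partial_Order.chain_def)
    with assms(1) \<open>\<C> \<noteq> {}\<close> have "\<Union>\<C> \<in> Th"
      by (simp add: closed_union_chains_def)
    with \<open>\<C> \<noteq> {}\<close> \<open>subset.chain \<A> \<C>\<close> show "\<Union>\<C> \<in> \<A>"
      by (auto simp: subset_chain_def \<A>_def)
  qed
  then obtain M where "M \<in> \<A>" and maximal: "\<And>X. X \<in> \<A> \<Longrightarrow> M \<subseteq> X \<Longrightarrow> X = M"
    by blast
  show thesis
  proof (rule that)
    show "M \<in> Th" "T \<subseteq> M" "a \<notin> M"
      using \<open>M \<in> \<A>\<close> by (simp_all add: \<A>_def)
    fix S assume "S \<in> Th" and "M \<subset> S"
    then show "a \<in> S"
      using \<open>T \<subseteq> M\<close> maximal[of S] by (auto simp: \<A>_def)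
  qed
qed

lemma totally_prime_theory_if_maximal_avoiding:
  assumes "M \<in> Th" and "a \<notin> M" and "\<And>S. S \<in> Th \<Longrightarrow> M \<subset> S \<Longrightarrow> a \<in> S"
  shows "totally_prime_theory Th M"
  unfolding totally_prime_theory_def
proof (intro conjI allI impI)
  show "M \<in> Th" by fact
  fix \<T> assume \<T>: "\<T> \<noteq> {} \<and> \<T> \<subseteq> Th \<and> M = \<Inter>\<T>"
  show "M \<in> \<T>"
  proof (rule ccontr)
    assume "M \<notin> \<T>"
    then have "\<forall>S\<in>\<T>. M \<subset> S"
      using \<T> by blast
    then have "a \<in> \<Inter>\<T>"
      using \<T> assms(3) by blast
    with \<T> assms(2) show False by simp
  qed
qed

lemma prime_theory_if_totally_prime_theory:
  "totally_prime_theory Th T \<Longrightarrow> prime_theory Th T"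
  by (simp add: totally_prime_theory_def prime_theory_def)

theorem corollary3p3:
  fixes Expr :: "'a set" and Th :: "'a set set" and vee wedge :: "'a \<Rightarrow> 'a \<Rightarrow> 'a"
  assumes "distributive_logic Expr Th vee wedge"
    and "T \<in> Th" and "a \<in> Expr" and "a \<notin> T"
  shows "\<exists>P. prime_theory Th P \<and> T \<subseteq> P \<and> a \<notin> P"
proof -
  have "closed_union_chains Th"
    using assms(1) by (simp add: distributive_logic_def)
  then obtain M
    where "M \<in> Th" "T \<subseteq> M" "a \<notin> M" "\<And>S. S \<in> Th \<Longrightarrow> M \<subset> S \<Longrightarrow> a \<in> S"
    using assms(2,4) by (rule maximal_theory_avoiding) blast
  then have "prime_theory Th M"
    by (intro prime_theory_if_totally_prime_theory totally_prime_theory_if_maximal_avoiding)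
  with \<open>T \<subseteq> M\<close> \<open>a \<notin> M\<close> show ?thesis by blast
qed

end
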